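(* Let $\Gamma$ be an uncountable set and $Z=\ell_2(\Gamma)$. Let $\theta:\mathbb{R}\to[0,\infty)$, $\theta(t)=0$ for $t\le0$ and $\theta(t)=t^2$ for $t\ge0$, and define $f:Z\to\mathbb{R}$ by $f(x)=\sum_{\gamma\in\Gamma}\theta(x_\gamma)$. Then $f$ is a continuous convex function with $0\le f(x)\le\|x\|^2$, $f$ is not constant on any line $\{x+tv:t\in\mathbb{R}\}$ with $v\neq0$ (so that the subspace $Y_f=\{v\in Z: f(tv)-f(0)-\langle 0,tv\rangle=0\ \forall t\}$ equals $\{0\}$), and yet there is no continuous linear form $\ell:Z\to\mathbb{R}$ such that $f-\ell$ is directionally coercive.
   Context: $\ell_2(\Gamma)$ is the Hilbert space of all $x:\Gamma\to\mathbb{R}$, written $x=(x_\gamma)_{\gamma\in\Gamma}$, with $\sum_{\gamma\in\Gamma}|x_\gamma|^2<\infty$, norm $\|x\|=(\sum_\gamma|x_\gamma|^2)^{1/2}$ and inner product $\langle x,y\rangle=\sum_\gamma x_\gamma y_\gamma$. A function $g$ on $Z$ is directionally coercive if $\lim_{t\to\infty}g(x+tv)=\infty$ for all $x\in Z$, $v\in Z\setminus\{0\}$. *)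

theory Defs
  imports "HOL-Analysis.Analysis"
begin

text \<open>The Hilbert space l2(Gamma), with Gamma the universe of a type 'a,
  represented as the set of square-summable real functions on 'a.\<close>

definition l2 :: "('a \<Rightarrow> real) set" where
  "l2 = {x. (\<lambda>g. (x g)\<^sup>2) summable_on UNIV}"

definition l2norm :: "('a \<Rightarrow> real) \<Rightarrow> real" where
  "l2norm x = sqrt (\<Sum>\<^sub>\<infinity>g. (x g)\<^sup>2)"

definition l2inner :: "('a \<Rightarrow> real) \<Rightarrow> ('a \<Rightarrow> real) \<Rightarrow> real" where
  "l2inner x y = (\<Sum>\<^sub>\<infinity>g. x g * y g)"

definition theta :: "real \<Rightarrow> real" where
  "theta t = (if t \<le> 0 then 0 else t\<^sup>2)"

definition ftheta :: "('a \<Rightarrow> real) \<Rightarrow> real" where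
  "ftheta x = (\<Sum>\<^sub>\<infinity>g. theta (x g))"

definition l2_continuous :: "(('a \<Rightarrow> real) \<Rightarrow> real) \<Rightarrow> bool" where
  "l2_continuous f \<longleftrightarrow> (\<forall>x\<in>l2. \<forall>e>0. \<exists>d>0. \<forall>y\<in>l2.
      l2norm (\<lambda>g. y g - x g) < d \<longrightarrow> \<bar>f y - f x\<bar> < e)"

definition l2_convex :: "(('a \<Rightarrow> real) \<Rightarrow> real) \<Rightarrow> bool" where
  "l2_convex f \<longleftrightarrow> (\<forall>x\<in>l2. \<forall>y\<in>l2. \<forall>u::real. 0 \<le> u \<and> u \<le> 1 \<longrightarrow>
      f (\<lambda>g. u * x g + (1 - u) * y g) \<le> u * f x + (1 - u) * f y)"

text \<open>Continuous linear form on l2 (its values off l2 are irrelevant).\<close>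
definition l2_cont_linear :: "(('a \<Rightarrow> real) \<Rightarrow> real) \<Rightarrow> bool" where
  "l2_cont_linear l \<longleftrightarrow>
     (\<forall>x\<in>l2. \<forall>y\<in>l2. l (\<lambda>g. x g + y g) = l x + l y) \<and>
     (\<forall>x\<in>l2. \<forall>c::real. l (\<lambda>g. c * x g) = c * l x) \<and>
     (\<exists>C. \<forall>x\<in>l2. \<bar>l x\<bar> \<le> C * l2norm x)"

definition l2_dir_coercive :: "(('a \<Rightarrow> real) \<Rightarrow> real) \<Rightarrow> bool" where
  "l2_dir_coercive h \<longleftrightarrow> (\<forall>x\<in>l2. \<forall>v\<in>l2. v \<noteq> (\<lambda>_. 0) \<longrightarrow>
      filterlim (\<lambda>t::real. h (\<lambda>g. x g + t * v g)) at_top at_top)"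

end

theory Submission
  imports Defs
begin

text \<open>\<open>theta t = (max t 0)\<^sup>2\<close> is convex, bounded by \<open>t\<^sup>2\<close>, and satisfies
  \<open>theta a - theta b \<le> \<bar>a - b\<bar> (\<bar>a\<bar> + \<bar>b\<bar>)\<close>; summing over the coordinates (after an AM-GM
  splitting of the last bound) gives convexity, the bound by \<open>\<parallel>x\<parallel>\<^sup>2\<close> and continuity of \<open>f\<close>.
  Some coordinate of \<open>x + t v\<close> tends to \<open>+\<infinity>\<close> in one of the two directions, so \<open>f\<close> is
  unbounded on every nontrivial line. A continuous linear form \<open>l\<close>, however, has \<open>l e\<^sub>\<gamma> > 0\<close>
  for only countably many \<open>\<gamma>\<close>: if infinitely many of these values exceeded \<open>1/n\<close>, then \<open>l\<close>
  would be at least \<open>N/n\<close> on a sum of \<open>N\<close> unit vectors, whose norm is \<open>\<surd>N\<close>. For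
  uncountable \<open>\<Gamma>\<close> some \<open>\<gamma>\<close> has \<open>l e\<^sub>\<gamma> \<le> 0\<close>, and along the ray \<open>-t e\<^sub>\<gamma>\<close> both \<open>f\<close> and
  \<open>-l\<close> stay \<open>\<le> 0\<close>.\<close>

lemma mult_le_square_div_add:
  fixes u w e :: real
  assumes "e > 0"
  shows "u * w \<le> u\<^sup>2 / e + e * w\<^sup>2 / 4"
proof -
  have "0 \<le> (u - e * w / 2)\<^sup>2" by simp
  also have "\<dots> = e * (u\<^sup>2 / e + e * w\<^sup>2 / 4 - u * w)"
    using assms by (simp add: power2_eq_square field_simps)
  finally show ?thesis using assms by (simp add: zero_le_mult_iff)
qed

lemma square_add_le:
  fixes p q :: real
  shows "(p + q)\<^sup>2 \<le> 2 * p\<^sup>2 + 2 * q\<^sup>2"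
proof -
  have "0 \<le> (p - q)\<^sup>2" by simp
  thus ?thesis by (simp add: power2_eq_square algebra_simps)
qed

lemma theta_nonneg: "0 \<le> theta t"
  by (simp add: theta_def)

lemma theta_le_square: "theta t \<le> t\<^sup>2"
  by (simp add: theta_def)

lemma theta_eq_square_max: "theta t = (max t 0)\<^sup>2"
  by (simp add: theta_def max_def)

lemma theta_convex:
  assumes "0 \<le> u" "u \<le> 1"
  shows "theta (u * a + (1 - u) * b) \<le> u * theta a + (1 - u) * theta b"
proof -
  define p q where "p = max a 0" and "q = max b 0"
  have "0 \<le> u * p" "0 \<le> (1 - u) * q" "u * a \<le> u * p" "(1 - u) * b \<le> (1 - u) * q"
    using assms by (auto simp: p_def q_def intro: mult_left_mono)
  hence "max (u * a + (1 - u) * b) 0 \<le> u * p + (1 - u) * q" by simp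
  hence "theta (u * a + (1 - u) * b) \<le> (u * p + (1 - u) * q)\<^sup>2"
    unfolding theta_eq_square_max by (intro power_mono) auto
  also have "\<dots> = u * p\<^sup>2 + (1 - u) * q\<^sup>2 - u * (1 - u) * (p - q)\<^sup>2"
    by (simp add: power2_eq_square algebra_simps)
  also have "\<dots> \<le> u * p\<^sup>2 + (1 - u) * q\<^sup>2"
    using assms by simp
  finally show ?thesis by (simp add: theta_eq_square_max p_def q_def)
qed

lemma theta_diff_le: "theta a - theta b \<le> \<bar>a - b\<bar> * (\<bar>a\<bar> + \<bar>b\<bar>)"
proof -
  define p q where "p = max a 0" and "q = max b 0"
  have "theta a - theta b = (p - q) * (p + q)"
    by (simp add: theta_eq_square_max p_def q_def power2_eq_square algebra_simps)
  also have "\<dots> \<le> \<bar>p - q\<bar> * (p + q)"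
    by (intro mult_right_mono) (auto simp: p_def q_def)
  also have "\<dots> \<le> \<bar>a - b\<bar> * (\<bar>a\<bar> + \<bar>b\<bar>)"
    by (intro mult_mono) (auto simp: p_def q_def)
  finally show ?thesis .
qed

lemma theta_le_add:
  assumes "e > 0"
  shows "theta a \<le> theta b + (a - b)\<^sup>2 / e + e * (a\<^sup>2 + b\<^sup>2)"
proof -
  have "theta a - theta b \<le> \<bar>a - b\<bar> * (\<bar>a\<bar> + \<bar>b\<bar>)"
    by (rule theta_diff_le)
  also have "\<dots> \<le> (a - b)\<^sup>2 / e + e * (\<bar>a\<bar> + \<bar>b\<bar>)\<^sup>2 / 4"
    using mult_le_square_div_add[OF assms, of "\<bar>a - b\<bar>" "\<bar>a\<bar> + \<bar>b\<bar>"] by simp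
  also have "(\<bar>a\<bar> + \<bar>b\<bar>)\<^sup>2 \<le> 4 * (a\<^sup>2 + b\<^sup>2)"
    using square_add_le[of "\<bar>a\<bar>" "\<bar>b\<bar>"] zero_le_power2[of a] zero_le_power2[of b]
    unfolding power2_abs by (smt (verit))
  hence "e * (\<bar>a\<bar> + \<bar>b\<bar>)\<^sup>2 / 4 \<le> e * (a\<^sup>2 + b\<^sup>2)"
    using assms by simp
  finally show ?thesis by simp
qed

lemma l2_square_summable: "x \<in> l2 \<Longrightarrow> (\<lambda>g. (x g)\<^sup>2) summable_on UNIV"
  by (simp add: l2_def)

lemma l2_zero: "(\<lambda>_. 0) \<in> l2"
  by (simp add: l2_def)

lemma l2_lincomb:
  assumes "x \<in> l2" "y \<in> l2"
  shows "(\<lambda>g. a * x g + b * y g) \<in> l2"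
proof -
  have "(\<lambda>g. 2 * a\<^sup>2 * (x g)\<^sup>2 + 2 * b\<^sup>2 * (y g)\<^sup>2) summable_on UNIV"
    unfolding mult.assoc[of 2]
    by (intro summable_on_add summable_on_cmult_right l2_square_summable assms)
  moreover have "(a * x g + b * y g)\<^sup>2 \<le> 2 * a\<^sup>2 * (x g)\<^sup>2 + 2 * b\<^sup>2 * (y g)\<^sup>2" for g
    using square_add_le[of "a * x g" "b * y g"] by (simp add: power_mult_distrib)
  ultimately show ?thesis
    unfolding l2_def by (auto intro: summable_on_comparison_test)
qed

lemma l2_line: "x \<in> l2 \<Longrightarrow> v \<in> l2 \<Longrightarrow> (\<lambda>g. x g + t * v g) \<in> l2"
  using l2_lincomb[of x v 1 t] by simp

lemma l2_diff: "x \<in> l2 \<Longrightarrow> y \<in> l2 \<Longrightarrow> (\<lambda>g. y g - x g) \<in> l2"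
  using l2_lincomb[of y x 1 "-1"] by simp

lemma l2_scale: "v \<in> l2 \<Longrightarrow> (\<lambda>g. t * v g) \<in> l2"
  using l2_lincomb[of v v t 0] by simp

lemma l2norm_nonneg: "0 \<le> l2norm x"
  by (simp add: l2norm_def infsum_nonneg)

lemma l2norm_diff_commute: "l2norm (\<lambda>g. x g - y g) = l2norm (\<lambda>g. y g - x g)"
  by (simp add: l2norm_def power2_commute)

lemma l2norm_square: "(l2norm x)\<^sup>2 = (\<Sum>\<^sub>\<infinity>g. (x g)\<^sup>2)"
  unfolding l2norm_def by (simp add: infsum_nonneg)

lemma l2norm_square_le:
  assumes "x \<in> l2" "y \<in> l2"
  shows "(l2norm y)\<^sup>2 \<le> 2 * (l2norm x)\<^sup>2 + 2 * (l2norm (\<lambda>g. y g - x g))\<^sup>2"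
proof -
  have w: "(\<lambda>g. y g - x g) \<in> l2" by (rule l2_diff[OF assms])
  have "(\<Sum>\<^sub>\<infinity>g. (y g)\<^sup>2) \<le> (\<Sum>\<^sub>\<infinity>g. 2 * (x g)\<^sup>2 + 2 * (y g - x g)\<^sup>2)"
    using square_add_le[of "x g" "y g - x g" for g]
    by (intro infsum_mono summable_on_add summable_on_cmult_right l2_square_summable assms w) simp
  also have "\<dots> = 2 * (\<Sum>\<^sub>\<infinity>g. (x g)\<^sup>2) + 2 * (\<Sum>\<^sub>\<infinity>g. (y g - x g)\<^sup>2)"
    by (simp add: infsum_add summable_on_cmult_right l2_square_summable assms w infsum_cmult_right)
  finally show ?thesis by (simp add: l2norm_square)
qed

lemma indicator_l2:
  assumes "finite F"
  shows "indicator F \<in> l2"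
  unfolding l2_def mem_Collect_eq
  by (rule summable_on_cong_neutral[of UNIV F "\<lambda>g. (indicator F g)\<^sup>2" "\<lambda>_. 1::real", THEN iffD1])
    (use assms in \<open>auto simp: indicator_def\<close>)

lemma l2norm_indicator: "finite F \<Longrightarrow> l2norm (indicator F) = sqrt (real (card F))"
proof -
  assume "finite F"
  have "(\<Sum>\<^sub>\<infinity>g. (indicator F g)\<^sup>2) = (\<Sum>\<^sub>\<infinity>g\<in>F. 1::real)"
    by (rule infsum_cong_neutral) (auto simp: indicator_def)
  thus ?thesis using \<open>finite F\<close> by (simp add: l2norm_def)
qed

lemma theta_summable: "x \<in> l2 \<Longrightarrow> (\<lambda>g. theta (x g)) summable_on UNIV"
  using l2_square_summable by (auto intro: summable_on_comparison_test theta_le_square theta_nonneg)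

lemma ftheta_nonneg: "0 \<le> ftheta x"
  unfolding ftheta_def by (intro infsum_nonneg theta_nonneg)

lemma ftheta_le_l2norm_square: "x \<in> l2 \<Longrightarrow> ftheta x \<le> (l2norm x)\<^sup>2"
  unfolding ftheta_def l2norm_square
  by (intro infsum_mono theta_summable l2_square_summable theta_le_square)

lemma ftheta_zero: "ftheta (\<lambda>_. 0) = 0"
  by (simp add: ftheta_def theta_def)

lemma theta_le_ftheta: "x \<in> l2 \<Longrightarrow> theta (x c) \<le> ftheta x"
  using finite_sum_le_infsum[OF theta_summable, of x "{c}"]
  by (simp add: ftheta_def theta_nonneg)

lemma l2_convex_ftheta: "l2_convex ftheta"
  unfolding l2_convex_def
proof (intro ballI allI impI)
  fix x y :: "'a \<Rightarrow> real" and u :: real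
  assume x: "x \<in> l2" and y: "y \<in> l2" and u: "0 \<le> u \<and> u \<le> 1"
  have sx: "(\<lambda>g. u * theta (x g)) summable_on UNIV"
    and sy: "(\<lambda>g. (1 - u) * theta (y g)) summable_on UNIV"
    by (intro summable_on_cmult_right theta_summable x y)+
  have "ftheta (\<lambda>g. u * x g + (1 - u) * y g) \<le> (\<Sum>\<^sub>\<infinity>g. u * theta (x g) + (1 - u) * theta (y g))"
    unfolding ftheta_def using u
    by (intro infsum_mono theta_summable l2_lincomb x y summable_on_add sx sy theta_convex) auto
  also have "\<dots> = u * ftheta x + (1 - u) * ftheta y"
    unfolding ftheta_def infsum_add[OF sx sy] infsum_cmult_right' ..
  finally show "ftheta (\<lambda>g. u * x g + (1 - u) * y g) \<le> u * ftheta x + (1 - u) * ftheta y" .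
qed

lemma ftheta_le_add:
  assumes x: "x \<in> l2" and y: "y \<in> l2" and e: "e > 0"
  shows "ftheta y \<le> ftheta x + (l2norm (\<lambda>g. y g - x g))\<^sup>2 / e + e * ((l2norm y)\<^sup>2 + (l2norm x)\<^sup>2)"
proof -
  have w: "(\<lambda>g. y g - x g) \<in> l2" by (rule l2_diff[OF x y])
  have sw: "(\<lambda>g. (y g - x g)\<^sup>2 / e) summable_on UNIV"
    and sxy: "(\<lambda>g. e * ((y g)\<^sup>2 + (x g)\<^sup>2)) summable_on UNIV"
    unfolding divide_inverse
    by (intro summable_on_cmult_left summable_on_cmult_right summable_on_add l2_square_summable x y w)+
  have "ftheta y \<le> (\<Sum>\<^sub>\<infinity>g. theta (x g) + (y g - x g)\<^sup>2 / e + e * ((y g)\<^sup>2 + (x g)\<^sup>2))"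
    unfolding ftheta_def
    by (intro infsum_mono summable_on_add theta_summable x y sw sxy theta_le_add e)
  also have "\<dots> = ftheta x + (\<Sum>\<^sub>\<infinity>g. (y g - x g)\<^sup>2) / e + e * ((\<Sum>\<^sub>\<infinity>g. (y g)\<^sup>2) + (\<Sum>\<^sub>\<infinity>g. (x g)\<^sup>2))"
    unfolding ftheta_def
    by (simp add: infsum_add summable_on_add theta_summable x y sw sxy infsum_cmult_right'
        infsum_cmult_left'[where c = "inverse e", folded divide_inverse] l2_square_summable w)
  finally show ?thesis by (simp add: l2norm_square)
qed

lemma abs_ftheta_diff_le:
  assumes x: "x \<in> l2" and y: "y \<in> l2" and e: "e > 0"
  defines "D \<equiv> l2norm (\<lambda>g. y g - x g)"
  shows "\<bar>ftheta y - ftheta x\<bar> \<le> D\<^sup>2 / e + e * (3 * (l2norm x)\<^sup>2 + 2 * D\<^sup>2)"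
proof -
  have "ftheta y - ftheta x \<le> D\<^sup>2 / e + e * ((l2norm y)\<^sup>2 + (l2norm x)\<^sup>2)"
    using ftheta_le_add[OF x y e] by (simp add: D_def)
  moreover have "ftheta x - ftheta y \<le> D\<^sup>2 / e + e * ((l2norm y)\<^sup>2 + (l2norm x)\<^sup>2)"
    using ftheta_le_add[OF y x e] unfolding D_def l2norm_diff_commute[of x y] by (simp add: algebra_simps)
  moreover have "e * ((l2norm y)\<^sup>2 + (l2norm x)\<^sup>2) \<le> e * (3 * (l2norm x)\<^sup>2 + 2 * D\<^sup>2)"
    using l2norm_square_le[OF x y] e by (simp add: D_def)
  ultimately show ?thesis by linarith
qed

lemma l2_continuous_ftheta: "l2_continuous ftheta"
  unfolding l2_continuous_def
proof (intro ballI allI impI)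
  fix x :: "'a \<Rightarrow> real" and eps :: real
  assume x: "x \<in> l2" and eps: "eps > 0"
  define N where "N = 3 * (l2norm x)\<^sup>2 + 2"
  define e where "e = eps / 2 / N"
  have "N > 0" by (simp add: N_def add_nonneg_pos)
  hence e: "e > 0" and e_mult: "e * N = eps / 2"
    using eps by (simp_all add: e_def)
  show "\<exists>d>0. \<forall>y\<in>l2. l2norm (\<lambda>g. y g - x g) < d \<longrightarrow> \<bar>ftheta y - ftheta x\<bar> < eps"
  proof (intro exI[of _ "sqrt (min 1 (e * eps / 2))"] conjI ballI impI)
    show "sqrt (min 1 (e * eps / 2)) > 0" using e eps by simp
    fix y assume y: "y \<in> l2" and yx: "l2norm (\<lambda>g. y g - x g) < sqrt (min 1 (e * eps / 2))"
    define D where "D = l2norm (\<lambda>g. y g - x g)"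
    have "D\<^sup>2 < (sqrt (min 1 (e * eps / 2)))\<^sup>2"
      using yx l2norm_nonneg unfolding D_def by (intro power_strict_mono) auto
    hence "D\<^sup>2 < 1" "D\<^sup>2 < e * eps / 2" using e eps by auto
    hence "D\<^sup>2 / e < eps / 2" "e * (3 * (l2norm x)\<^sup>2 + 2 * D\<^sup>2) \<le> eps / 2"
      using e e_mult[symmetric] by (auto simp: N_def field_simps)
    thus "\<bar>ftheta y - ftheta x\<bar> < eps"
      using abs_ftheta_diff_le[OF x y e] unfolding D_def by linarith
  qed
qed

lemma ftheta_unbounded_on_line:
  assumes x: "x \<in> l2" and v: "v \<in> l2" and v_nz: "v \<noteq> (\<lambda>_. 0)"
  shows "\<exists>t. c < ftheta (\<lambda>g. x g + t * v g)"
proof -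
  obtain \<gamma> where \<gamma>: "v \<gamma> \<noteq> 0" using v_nz by auto
  define t where "t = (\<bar>c\<bar> + \<bar>x \<gamma>\<bar> + 1) / v \<gamma>"
  define z where "z = x \<gamma> + t * v \<gamma>"
  have z: "\<bar>c\<bar> + 1 \<le> z" using \<gamma> by (simp add: z_def t_def)
  hence "1 \<le> z" by linarith
  hence "z \<le> z\<^sup>2" using mult_left_mono[of 1 z z] by (simp add: power2_eq_square)
  also have "z\<^sup>2 = theta z" using z by (simp add: theta_def)
  also have "\<dots> \<le> ftheta (\<lambda>g. x g + t * v g)"
    unfolding z_def by (intro theta_le_ftheta l2_line x v)
  finally show ?thesis using z by (intro exI[of _ t]) linarith
qed

lemma ftheta_radial_zero_iff:
  assumes "v \<in> l2"
  shows "(\<forall>t. ftheta (\<lambda>g. t * v g) = 0) \<longleftrightarrow> v = (\<lambda>_. 0)"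
proof
  assume radial: "\<forall>t. ftheta (\<lambda>g. t * v g) = 0"
  show "v = (\<lambda>_. 0)"
  proof (rule ccontr)
    assume "v \<noteq> (\<lambda>_. 0)"
    then obtain t where "0 < ftheta (\<lambda>g. 0 + t * v g)"
      using ftheta_unbounded_on_line[OF l2_zero assms] by blast
    with radial show False by simp
  qed
qed (simp add: ftheta_zero)

lemma ftheta_lineality_space:
  "{v \<in> l2. \<forall>t::real. ftheta (\<lambda>g. t * v g) - ftheta (\<lambda>_. 0) - l2inner (\<lambda>_. 0) (\<lambda>g. t * v g) = 0}
    = {\<lambda>_. 0}"
  using ftheta_radial_zero_iff l2_zero by (auto simp: ftheta_zero l2inner_def)

lemma l2_cont_linear_zero: "l2_cont_linear l \<Longrightarrow> l (\<lambda>_. 0) = 0"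
  unfolding l2_cont_linear_def using l2_zero by force

lemma l2_cont_linear_indicator:
  assumes l: "l2_cont_linear l" and F: "finite F"
  shows "l (indicator F) = (\<Sum>a\<in>F. l (indicator {a}))"
  using F
proof (induction F rule: finite_induct)
  case empty
  then show ?case using l2_cont_linear_zero[OF l] by (simp add: indicator_def)
next
  case (insert a F)
  have "indicator (insert a F) = (\<lambda>g. indicator {a} g + indicator F g :: real)"
    using insert.hyps(2) by (auto simp: indicator_def)
  thus ?case using l insert indicator_l2[of "{a}"] indicator_l2[of F]
    by (simp add: l2_cont_linear_def)
qed

lemma l2_cont_linear_finite_indicator_gt:
  assumes l: "l2_cont_linear l" and r: "r > 0"
  shows "finite {c. r < l (indicator {c})}"
proof (rule ccontr)
  obtain C where C: "\<And>x. x \<in> l2 \<Longrightarrow> \<bar>l x\<bar> \<le> C * l2norm x"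
    using l unfolding l2_cont_linear_def by blast
  define N where "N = nat \<lceil>(C / r)\<^sup>2\<rceil> + 1"
  assume "infinite {c. r < l (indicator {c})}"
  then obtain F where F: "finite F" "card F = N" "F \<subseteq> {c. r < l (indicator {c})}"
    using infinite_arbitrarily_large by blast
  have "r * real N = (\<Sum>a\<in>F. r)" using F by simp
  also have "\<dots> \<le> (\<Sum>a\<in>F. l (indicator {a}))"
    using F(3) by (intro sum_mono) auto
  also have "\<dots> = l (indicator F)" using l2_cont_linear_indicator[OF l F(1)] ..
  also have "\<dots> \<le> C * sqrt (real N)"
    using C[OF indicator_l2[OF F(1)]] l2norm_indicator[OF F(1)] F(2) by simp
  also have "r * real N = (r * sqrt N) * sqrt N" by simp
  finally have "r * sqrt N \<le> C"
    by (rule mult_right_le_imp_le) (simp add: N_def del: of_nat_Suc)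
  hence "sqrt N \<le> C / r" using r by (simp add: field_simps)
  hence "(sqrt N)\<^sup>2 \<le> (C / r)\<^sup>2" by (intro power_mono) simp_all
  hence "real N \<le> (C / r)\<^sup>2" by simp
  thus False unfolding N_def by linarith
qed

lemma l2_cont_linear_countable_indicator_pos:
  assumes l: "l2_cont_linear l"
  shows "countable {c. 0 < l (indicator {c})}"
proof -
  have eq: "{c. 0 < l (indicator {c})} = (\<Union>n\<in>{0<..}. {c. inverse (real n) < l (indicator {c})})"
    using ex_inverse_of_nat_less by (auto intro: order.strict_trans[rotated])
  show ?thesis
    unfolding eq by (rule countable_UN) (auto intro!: countable_finite l2_cont_linear_finite_indicator_gt[OF l])
qed

lemma not_dir_coercive_ftheta_minus:
  assumes l: "l2_cont_linear l" and c: "l (indicator {c}) \<le> 0"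
  shows "\<not> l2_dir_coercive (\<lambda>x. ftheta x - l x)"
proof
  define v where "v = (\<lambda>g. (-1) * indicator {c} g :: real)"
  have v: "v \<in> l2" unfolding v_def by (intro l2_scale indicator_l2) simp
  have "v c \<noteq> 0" by (simp add: v_def)
  hence v_nz: "v \<noteq> (\<lambda>_. 0)" by auto
  have ray_nonpos: "ftheta (\<lambda>g. t * v g) - l (\<lambda>g. t * v g) \<le> 0" if "t \<ge> 0" for t
  proof -
    have ray: "(\<lambda>g. t * v g) = (\<lambda>g. (-t) * indicator {c} g)" by (simp add: v_def)
    have "ftheta (\<lambda>g. (-t) * indicator {c} g) = 0"
      using that by (simp add: ftheta_def theta_def indicator_def)
    moreover have "l (\<lambda>g. (-t) * indicator {c} g) = (-t) * l (indicator {c})"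
      using l indicator_l2[of "{c}"] unfolding l2_cont_linear_def by blast
    ultimately show ?thesis unfolding ray using that c by (simp add: mult_nonneg_nonpos)
  qed
  assume "l2_dir_coercive (\<lambda>x. ftheta x - l x)"
  hence "filterlim (\<lambda>t. ftheta (\<lambda>g. t * v g) - l (\<lambda>g. t * v g)) at_top at_top"
    unfolding l2_dir_coercive_def using l2_zero v v_nz by fastforce
  hence "\<forall>\<^sub>F t in at_top. 1 \<le> ftheta (\<lambda>g. t * v g) - l (\<lambda>g. t * v g)"
    by (simp add: filterlim_at_top)
  moreover have "\<forall>\<^sub>F t in at_top. (0::real) \<le> t"
    by (rule eventually_ge_at_top)
  ultimately have "\<forall>\<^sub>F t::real in at_top. False"
    by eventually_elim (use ray_nonpos in force)
  thus False by simp
qed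

lemma no_cont_linear_coercive_ftheta:
  assumes "uncountable (UNIV :: 'a set)"
  shows "\<not> (\<exists>l :: ('a \<Rightarrow> real) \<Rightarrow> real. l2_cont_linear l \<and> l2_dir_coercive (\<lambda>x. ftheta x - l x))"
proof (intro notI, elim exE conjE)
  fix l :: "('a \<Rightarrow> real) \<Rightarrow> real"
  assume l: "l2_cont_linear l" and coercive: "l2_dir_coercive (\<lambda>x. ftheta x - l x)"
  have "{c. 0 < l (indicator {c})} \<noteq> UNIV"
    using l2_cont_linear_countable_indicator_pos[OF l] assms by metis
  then obtain c where "\<not> 0 < l (indicator {c})" by blast
  hence "l (indicator {c}) \<le> 0" by simp
  thus False using not_dir_coercive_ftheta_minus[OF l] coercive by blast
qed

theorem mainTheorem9:
  assumes "uncountable (UNIV :: 'a set)"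
  shows "l2_continuous (ftheta :: ('a \<Rightarrow> real) \<Rightarrow> real)
    \<and> l2_convex (ftheta :: ('a \<Rightarrow> real) \<Rightarrow> real)
    \<and> (\<forall>x\<in>(l2 :: ('a \<Rightarrow> real) set). 0 \<le> ftheta x \<and> ftheta x \<le> (l2norm x)\<^sup>2)
    \<and> (\<forall>x\<in>(l2 :: ('a \<Rightarrow> real) set). \<forall>v\<in>l2. v \<noteq> (\<lambda>_. 0) \<longrightarrow>
          \<not> (\<exists>c. \<forall>t::real. ftheta (\<lambda>g. x g + t * v g) = c))
    \<and> {v \<in> (l2 :: ('a \<Rightarrow> real) set). \<forall>t::real.
          ftheta (\<lambda>g. t * v g) - ftheta (\<lambda>_. 0) - l2inner (\<lambda>_. 0) (\<lambda>g. t * v g) = 0}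
        = {\<lambda>_. 0}
    \<and> \<not> (\<exists>l :: ('a \<Rightarrow> real) \<Rightarrow> real. l2_cont_linear l
          \<and> l2_dir_coercive (\<lambda>x. ftheta x - l x))"
proof (intro conjI ballI impI l2_continuous_ftheta l2_convex_ftheta ftheta_nonneg
    ftheta_le_l2norm_square ftheta_lineality_space no_cont_linear_coercive_ftheta[OF assms])
  show "\<not> (\<exists>c. \<forall>t. ftheta (\<lambda>g. x g + t * v g) = c)"
    if "x \<in> l2" "v \<in> l2" "v \<noteq> (\<lambda>_. 0)" for x v :: "'a \<Rightarrow> real"
    using ftheta_unbounded_on_line[OF that] by force
qed

end
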